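(* Let $B$ be a (closed, filled) convex $n$-sided polygon in $D$ with $n\geq 2$ such that $\rho(\psi_B)$ is rational. Then $\psi_B$ is not conjugate to a rotation.
   Context: $D$ is the open unit disk in $\mathbb R^2$, $S^1$ its boundary circle identified with $\mathbb R/\mathbb Z$ via the counterclockwise normalized angle. For a closed convex $U\subset D$ and $v\in S^1$, $\psi_U(v)$ is the point $w\in S^1\setminus\{v\}$ such that the line $vw$ meets $U$ and $U$ lies in the closed half-plane to the left of the directed line from $v$ to $w$; it is an orientation-preserving homeomorphism of $S^1$. For such $f$, $\rho(f)=\lim_{n\to\infty}(\overline f^n(x)-x)/n$ with $\overline f$ the lift to $\mathbb R$ satisfying $\overline f(0)\in[0,1)$. "Conjugate to a rotation" means $h\circ\psi_B\circ h^{-1}$ is a rigid rotation of $S^1$ for some homeomorphism $h$ of $S^1$. *)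

theory Defs
  imports "HOL-Analysis.Analysis"
begin

text \<open>We model R^2 as the complex plane. D = ball 0 1, S^1 = sphere 0 1,
  identified with R/Z via t |-> exp(2 pi i t) (counterclockwise normalized angle).\<close>

definition circ :: "real \<Rightarrow> complex" where
  "circ t = cis (2 * pi * t)"

definition left_of :: "complex \<Rightarrow> complex \<Rightarrow> complex \<Rightarrow> bool" where
  "left_of v w z \<longleftrightarrow> Im (cnj (w - v) * (z - v)) \<ge> 0"

definition line_through :: "complex \<Rightarrow> complex \<Rightarrow> complex set" where
  "line_through v w = {v + t *\<^sub>R (w - v) | t. True}"

definition psi :: "complex set \<Rightarrow> complex \<Rightarrow> complex" where
  "psi U v = (THE w. w \<in> sphere 0 1 \<and> w \<noteq> v \<and> line_through v w \<inter> U \<noteq> {}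
                     \<and> (\<forall>z\<in>U. left_of v w z))"

definition circle_lift :: "(complex \<Rightarrow> complex) \<Rightarrow> real \<Rightarrow> real" where
  "circle_lift f = (THE F. continuous_on UNIV F \<and> (\<forall>x. f (circ x) = circ (F x))
                          \<and> 0 \<le> F 0 \<and> F 0 < 1)"

definition rot_number :: "(complex \<Rightarrow> complex) \<Rightarrow> real" where
  "rot_number f = lim (\<lambda>n. ((circle_lift f ^^ n) 0 - 0) / real n)"

definition conj_to_rotation :: "(complex \<Rightarrow> complex) \<Rightarrow> bool" where
  "conj_to_rotation f \<longleftrightarrow>
     (\<exists>h k (c::complex). homeomorphism (sphere 0 1) (sphere 0 1) h k \<and> norm c = 1 \<and>
        (\<forall>z\<in>sphere 0 1. h (f (k z)) = c * z))"

text \<open>B is a closed filled convex n-sided polygon in D: the convex hull of n points of D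
  in convex position (each an extreme point); n = 2 gives a segment.\<close>
definition convex_polygon :: "nat \<Rightarrow> complex set \<Rightarrow> bool" where
  "convex_polygon n B \<longleftrightarrow>
     (\<exists>P. finite P \<and> card P = n \<and> P \<subseteq> ball 0 1 \<and> B = convex hull P \<and>
          (\<forall>p\<in>P. p \<notin> convex hull (P - {p})))"

end

(*
  Write B as the convex hull of its vertex set P. For p in the disk, the chord of the unit
  circle from circ x through p ends at circ (chord_end p x), where chord_end p lifts an
  analytic circle diffeomorphism. A convex polygon lies to the left of a chord iff all its
  vertices do, so the lift of psi_B is the lower envelope F x = min {chord_end p x | p in P}.

  If rho(psi_B) = a / b, then F^b - id - a is continuous, 1-periodic and changes sign, so
  psi_B has a periodic point; a map conjugate to a rotation with a point of period b has
  psi_B^b = id, hence F^b is a translation. But F has one-sided derivatives with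
  0 < F'(x+) <= F'(x-) everywhere, and the inequality is strict wherever two vertices are
  active, because two chord maps through distinct points with the same value at x have
  distinct derivatives there. The chain rule carries the strict inequality over to F^b,
  which a translation cannot have.
*)

theory Submission
  imports Defs
begin

section \<open>The circle and its chords\<close>

lemma norm_circ [simp]: "norm (circ t) = 1"
  by (simp add: circ_def)

lemma Re_circ: "Re (circ t) = cos (2 * pi * t)" and Im_circ: "Im (circ t) = sin (2 * pi * t)"
  by (simp_all add: circ_def)

lemma circ_eq_1_iff: "circ t = 1 \<longleftrightarrow> t \<in> \<int>"
proof -
  have "circ t = 1 \<longleftrightarrow> (\<exists>n::int. 2 * pi * t = of_int (2 * n) * pi)"
    by (simp add: circ_def cis_conv_exp exp_eq_1)
  also have "\<dots> \<longleftrightarrow> (\<exists>n::int. t = of_int n)"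
    by simp
  finally show ?thesis
    by (auto simp: Ints_def)
qed

lemma circ_eq_circ_iff: "circ s = circ t \<longleftrightarrow> s - t \<in> \<int>"
proof -
  have "circ s = circ t \<longleftrightarrow> circ s / circ t = 1"
    using norm_circ[of t] by (auto simp del: norm_circ)
  also have "circ s / circ t = circ (s - t)"
    by (simp add: circ_def cis_divide right_diff_distrib)
  finally show ?thesis
    by (simp add: circ_eq_1_iff)
qed

lemma circ_add_of_int [simp]: "circ (t + of_int n) = circ t"
  by (simp add: circ_eq_circ_iff)

lemma sphere_eq_range_circ: "sphere 0 1 = range circ"
proof
  show "sphere 0 1 \<subseteq> range circ"
  proof
    fix w :: complex assume "w \<in> sphere 0 1"
    then have "w = cis (Arg w)"
      using cis_Arg[of w] by (fastforce simp: sgn_div_norm)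
    also have "\<dots> = circ (Arg w / (2 * pi))"
      by (simp add: circ_def)
    finally show "w \<in> range circ" by blast
  qed
qed auto

lemma sphere_eq_circ_add:
  assumes "w \<in> sphere 0 1" "w \<noteq> circ x"
  obtains t where "0 < t" "t < 1" "w = circ (x + t)"
proof -
  obtain s where s: "w = circ s"
    using assms(1) sphere_eq_range_circ by auto
  have "w = circ (x + frac (s - x))"
    unfolding s circ_eq_circ_iff by (simp add: frac_def)
  moreover have "frac (s - x) \<noteq> 0"
    using assms(2) by (auto simp: s circ_eq_circ_iff frac_eq_0_iff)
  then have "0 < frac (s - x)"
    using frac_ge_0[of "s - x"] by linarith
  ultimately show ?thesis
    using that frac_lt_1[of "s - x"] by blast
qed

lemma circ_add_neq: "0 < t \<Longrightarrow> t < 1 \<Longrightarrow> circ (x + t) \<noteq> circ x"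
  by (auto simp: circ_eq_circ_iff elim!: Ints_cases)

lemma line_through_iff_Im:
  assumes "w \<noteq> v"
  shows "z \<in> line_through v w \<longleftrightarrow> Im (cnj (w - v) * (z - v)) = 0"
proof
  assume "z \<in> line_through v w"
  then obtain s :: real where "z = v + s *\<^sub>R (w - v)"
    by (auto simp: line_through_def)
  then have "z - v = of_real s * (w - v)"
    by (simp add: scaleR_conv_of_real)
  then have "cnj (w - v) * (z - v) = of_real s * ((w - v) * cnj (w - v))"
    by (simp only: ac_simps)
  also have "\<dots> = of_real (s * (norm (w - v))\<^sup>2)"
    by (simp only: of_real_mult complex_norm_square)
  finally show "Im (cnj (w - v) * (z - v)) = 0"
    by (metis Im_complex_of_real)
next
  define r where "r = Re (cnj (w - v) * (z - v))"
  assume "Im (cnj (w - v) * (z - v)) = 0"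
  then have "cnj (w - v) * (z - v) = of_real r"
    by (simp add: complex_eq_iff r_def)
  then have "of_real ((norm (w - v))\<^sup>2) * (z - v) = (w - v) * of_real r"
    by (metis complex_norm_square mult.assoc)
  then have "z = v + (r / (norm (w - v))\<^sup>2) *\<^sub>R (w - v)"
    using assms by (simp add: scaleR_conv_of_real field_simps)
  then show "z \<in> line_through v w"
    by (auto simp: line_through_def)
qed

section \<open>Lifts of circle homeomorphisms\<close>

lemma Ints_valued_continuous_const:
  fixes g :: "real \<Rightarrow> real"
  assumes "continuous_on UNIV g" "\<And>x. g x \<in> \<int>"
  shows "g x = g y"
proof -
  have "g constant_on UNIV"
    using continuous_discrete_range_constant[OF connected_UNIV assms(1)]
    by (metis Ints_diff Ints_nonzero_abs_ge1 assms(2) real_norm_def right_minus_eq zero_less_one)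
  then show ?thesis
    by (auto simp: constant_on_def)
qed

lemma circle_lift_unique:
  assumes "continuous_on UNIV F" "\<And>x. f (circ x) = circ (F x)" "0 \<le> F 0" "F 0 < 1"
  shows "circle_lift f = F"
  unfolding circle_lift_def
proof (rule the_equality)
  fix G assume G: "continuous_on UNIV G \<and> (\<forall>x. f (circ x) = circ (G x)) \<and> 0 \<le> G 0 \<and> G 0 < 1"
  have "continuous_on UNIV (\<lambda>x. G x - F x)"
    using G assms(1) by (intro continuous_on_diff) auto
  moreover have ints: "G x - F x \<in> \<int>" for x
    using G assms(2) by (metis circ_eq_circ_iff)
  ultimately have const: "G x - F x = G 0 - F 0" for x
    by (rule Ints_valued_continuous_const)
  have "\<bar>G 0 - F 0\<bar> < 1"
    using G assms(3,4) by linarith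
  then have "G 0 - F 0 = 0"
    using Ints_nonzero_abs_ge1[OF ints[of 0]] by linarith
  then have "G x = F x" for x
    using const[of x] by linarith
  then show "G = F"
    by (rule ext)
qed (use assms in auto)

lemma exists_zero_if_sign_change:
  fixes H :: "real \<Rightarrow> real"
  assumes "continuous_on UNIV H" "H a \<le> 0" "0 \<le> H b"
  obtains x where "H x = 0"
proof -
  have "connected (range H)"
    using connected_continuous_image[OF assms(1) connected_UNIV] .
  moreover have "H a \<in> range H" "H b \<in> range H"
    by simp_all
  ultimately have "0 \<in> range H"
    using assms(2,3) unfolding connected_iff_interval by blast
  then obtain x where "0 = H x" ..
  then show ?thesis
    using that by simp
qed

lemma continuous_periodic_attains_bounds:
  fixes H :: "real \<Rightarrow> real"
  assumes "continuous_on UNIV H" "\<And>x k. H (x + of_int k) = H x"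
  obtains xmin xmax where "\<And>y. H xmin \<le> H y" "\<And>y. H y \<le> H xmax"
proof -
  obtain xmin xmax where "\<forall>y\<in>{0..1}. H xmin \<le> H y" "\<forall>y\<in>{0..1}. H y \<le> H xmax"
    using continuous_attains_inf[of "{0..1}" H] continuous_attains_sup[of "{0..1}" H]
      continuous_on_subset[OF assms(1)] by auto
  moreover have "frac y \<in> {0..1}" for y
    by (simp add: frac_ge_0 frac_lt_1 less_imp_le)
  moreover have "H (frac y) = H y" for y
    using assms(2)[of y "- \<lfloor>y\<rfloor>"] by (simp add: frac_def)
  ultimately show ?thesis
    using that by metis
qed

lemma add_of_int_if_add_1:
  fixes G :: "real \<Rightarrow> real"
  assumes "\<And>x. G (x + 1) = G x + 1"
  shows "G (x + of_int k) = G x + of_int k"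
proof (induction k rule: int_induct[where k = 0])
  case (step1 i)
  then show ?case
    using assms[of "x + of_int i"] by (simp add: add.assoc)
next
  case (step2 i)
  then show ?case
    using assms[of "x + of_int (i - 1)"] by (simp add: add.assoc)
qed simp

lemma funpow_ge_if_ge:
  fixes g :: "real \<Rightarrow> real"
  assumes "\<And>x. x + c \<le> g x"
  shows "x + real k * c \<le> (g ^^ k) x"
proof (induction k)
  case (Suc k)
  then show ?case
    using assms[of "(g ^^ k) x"] by (simp add: algebra_simps)
qed simp

lemma funpow_le_if_le:
  fixes g :: "real \<Rightarrow> real"
  assumes "\<And>x. g x \<le> x + c"
  shows "(g ^^ k) x \<le> x + real k * c"
proof (induction k)
  case (Suc k)
  then show ?case
    using assms[of "(g ^^ k) x"] by (simp add: algebra_simps)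
qed simp

locale circle_homeo_lift =
  fixes F :: "real \<Rightarrow> real"
  assumes strict_mono: "strict_mono F"
    and continuous: "continuous_on UNIV F"
    and add_1: "F (x + 1) = F x + 1"
begin

lemma funpow_add_1: "(F ^^ n) (x + 1) = (F ^^ n) x + 1"
  by (induction n) (simp_all add: add_1)

lemma funpow_add_of_int: "(F ^^ n) (x + of_int k) = (F ^^ n) x + of_int k"
  by (rule add_of_int_if_add_1) (rule funpow_add_1)

lemma strict_mono_funpow: "strict_mono (F ^^ n)"
  by (induction n) (simp_all add: strict_mono_def strict_mono[THEN strict_monoD])

lemma continuous_on_funpow: "continuous_on UNIV (F ^^ n)"
  by (induction n) (auto intro: continuous_on_compose2[OF continuous] simp: continuous_on_id)

lemma displacement_diff_less_1: "\<bar>((F ^^ n) x - x) - ((F ^^ n) y - y)\<bar> < 1"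
proof -
  define y' where "y' = y + of_int \<lfloor>x - y\<rfloor>"
  have y': "y' \<le> x" "x < y' + 1"
    unfolding y'_def by linarith+
  have "(F ^^ n) y' \<le> (F ^^ n) x" "(F ^^ n) x < (F ^^ n) (y' + 1)"
    using y' strict_mono_funpow[of n] by (auto simp: strict_mono_less_eq strict_mono_less)
  moreover have "(F ^^ n) y' - y' = (F ^^ n) y - y"
    by (simp add: y'_def funpow_add_of_int)
  ultimately show ?thesis
    using y' by (simp add: funpow_add_1 abs_less_iff)
qed

lemma funpow_0_add: "\<bar>(F ^^ (m + n)) 0 - (F ^^ m) 0 - (F ^^ n) 0\<bar> < 1"
  using displacement_diff_less_1[of m "(F ^^ n) 0" 0] by (simp add: funpow_add)

lemma funpow_0_mult: "\<bar>(F ^^ (k * n)) 0 - real k * (F ^^ n) 0\<bar> \<le> real k"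
proof (induction k)
  case (Suc k)
  have "(F ^^ (Suc k * n)) 0 - real (Suc k) * (F ^^ n) 0
      = ((F ^^ (n + k * n)) 0 - (F ^^ n) 0 - (F ^^ (k * n)) 0) + ((F ^^ (k * n)) 0 - real k * (F ^^ n) 0)"
    by (simp add: algebra_simps)
  then show ?case
    using funpow_0_add[of n "k * n"] Suc.IH by linarith
qed simp

lemma funpow_0_div_diff:
  assumes "0 < m" "0 < n"
  shows "\<bar>(F ^^ m) 0 / m - (F ^^ n) 0 / n\<bar> \<le> 1 / m + 1 / n"
proof -
  have "\<bar>(F ^^ (n * m)) 0 / (m * n) - (F ^^ m) 0 / m\<bar> \<le> 1 / m"
    using funpow_0_mult[of n m] assms by (simp add: field_simps)
  moreover have "\<bar>(F ^^ (n * m)) 0 / (m * n) - (F ^^ n) 0 / n\<bar> \<le> 1 / n"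
    using funpow_0_mult[of m n] assms by (simp add: field_simps mult.commute[of n m])
  ultimately show ?thesis
    by linarith
qed

lemma convergent_funpow_0_div: "convergent (\<lambda>n. (F ^^ n) 0 / real n)"
proof (rule Cauchy_convergent, rule metric_CauchyI)
  fix e :: real
  assume "0 < e"
  then obtain N :: nat where "0 < N" "inverse (real N) < e / 2"
    using ex_inverse_of_nat_less[of "e / 2"] by auto
  have "\<bar>(F ^^ m) 0 / m - (F ^^ n) 0 / n\<bar> < e" if "N \<le> m" "N \<le> n" for m n
  proof -
    have "1 / real m \<le> inverse (real N)" "1 / real n \<le> inverse (real N)"
      using that \<open>0 < N\<close> by (simp_all add: divide_simps)
    then show ?thesis
      using funpow_0_div_diff[of m n] that \<open>0 < N\<close> \<open>inverse (real N) < e / 2\<close> by linarith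
  qed
  then show "\<exists>M. \<forall>m\<ge>M. \<forall>n\<ge>M. dist ((F ^^ m) 0 / m) ((F ^^ n) 0 / n) < e"
    by (auto simp: dist_real_def)
qed

definition transl_number :: real where
  "transl_number = lim (\<lambda>n. (F ^^ n) 0 / real n)"

lemma rot_number_eq_transl_number: "circle_lift f = F \<Longrightarrow> rot_number f = transl_number"
  by (simp add: rot_number_def transl_number_def)

lemma LIMSEQ_transl_number: "(\<lambda>n. (F ^^ n) 0 / real n) \<longlonglongrightarrow> transl_number"
  using convergent_funpow_0_div by (simp add: transl_number_def convergent_LIMSEQ_iff)

lemma LIMSEQ_transl_number_multiples:
  assumes "0 < q"
  shows "(\<lambda>k. (F ^^ (q * Suc k)) 0 / real (q * Suc k)) \<longlonglongrightarrow> transl_number"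
proof -
  have "strict_mono (\<lambda>k. q * Suc k)"
    using assms by (simp add: strict_mono_Suc_iff)
  then show ?thesis
    using LIMSEQ_subseq_LIMSEQ[OF LIMSEQ_transl_number] by (simp only: o_def)
qed

lemma transl_number_ge:
  assumes "0 < q" "\<And>x. x + c \<le> (F ^^ q) x"
  shows "c / q \<le> transl_number"
proof (rule LIMSEQ_le_const[OF LIMSEQ_transl_number_multiples[OF assms(1)]], intro exI allI impI)
  fix k :: nat
  have "real (Suc k) * c \<le> (F ^^ (q * Suc k)) 0"
    using funpow_ge_if_ge[of c "F ^^ q" 0 "Suc k"] assms(2) by (simp add: funpow_mult)
  have "c / q = real (Suc k) * c / real (q * Suc k)"
    by (metis mult.commute nonzero_mult_divide_mult_cancel_left of_nat_neq_0 of_nat_mult)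
  also have "\<dots> \<le> (F ^^ (q * Suc k)) 0 / real (q * Suc k)"
    using \<open>real (Suc k) * c \<le> (F ^^ (q * Suc k)) 0\<close> by (rule divide_right_mono) simp
  finally show "c / q \<le> (F ^^ (q * Suc k)) 0 / real (q * Suc k)" .
qed

lemma transl_number_le:
  assumes "0 < q" "\<And>x. (F ^^ q) x \<le> x + c"
  shows "transl_number \<le> c / q"
proof (rule LIMSEQ_le_const2[OF LIMSEQ_transl_number_multiples[OF assms(1)]], intro exI allI impI)
  fix k :: nat
  have "(F ^^ (q * Suc k)) 0 \<le> real (Suc k) * c"
    using funpow_le_if_le[of "F ^^ q" c "Suc k" 0] assms(2) by (simp add: funpow_mult)
  then have "(F ^^ (q * Suc k)) 0 / real (q * Suc k) \<le> real (Suc k) * c / real (q * Suc k)"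
    by (rule divide_right_mono) simp
  also have "\<dots> = c / q"
    by (metis mult.commute nonzero_mult_divide_mult_cancel_left of_nat_neq_0 of_nat_mult)
  finally show "(F ^^ (q * Suc k)) 0 / real (q * Suc k) \<le> c / q" .
qed

lemma exists_periodic_point:
  assumes "0 < q" "transl_number = of_int p / q"
  obtains x where "(F ^^ q) x = x + of_int p"
proof -
  define H where "H x = (F ^^ q) x - x - of_int p" for x
  have cont: "continuous_on UNIV H"
    unfolding H_def[abs_def] by (intro continuous_intros continuous_on_funpow)
  moreover have "H (x + of_int k) = H x" for x k
    by (simp add: H_def funpow_add_of_int)
  ultimately obtain xmin xmax where bounds: "\<And>y. H xmin \<le> H y" "\<And>y. H y \<le> H xmax"
    using continuous_periodic_attains_bounds by blast
  have "x + (of_int p + H xmin) \<le> (F ^^ q) x" "(F ^^ q) x \<le> x + (of_int p + H xmax)" for x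
    using bounds[of x] by (simp_all add: H_def)
  then have "(of_int p + H xmin) / q \<le> of_int p / q" "of_int p / q \<le> (of_int p + H xmax) / q"
    using transl_number_ge[OF assms(1)] transl_number_le[OF assms(1)] assms(2) by metis+
  then have "H xmin \<le> 0" "0 \<le> H xmax"
    using assms(1) by (simp_all add: divide_le_cancel)
  then obtain x where "H x = 0"
    using cont by (metis exists_zero_if_sign_change)
  then show ?thesis
    using that by (simp add: H_def algebra_simps)
qed

lemma funpow_translation_if_circ_fixed:
  assumes "\<And>x. circ ((F ^^ q) x) = circ x"
  shows "F ^^ q = (\<lambda>x. x + (F ^^ q) 0)"
proof
  fix x
  have "continuous_on UNIV (\<lambda>x. (F ^^ q) x - x)"
    by (intro continuous_intros continuous_on_funpow)
  moreover have "(F ^^ q) x - x \<in> \<int>" for x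
    using assms by (simp add: circ_eq_circ_iff)
  ultimately have "(F ^^ q) x - x = (F ^^ q) 0 - 0"
    by (rule Ints_valued_continuous_const)
  then show "(F ^^ q) x = x + (F ^^ q) 0"
    by simp
qed

end

section \<open>Chords through a point of the disk\<close>

text \<open>The coordinates of circ x - p in the frame rotated by -2 pi x (lemma frame_complex).\<close>

definition frame_re :: "complex \<Rightarrow> real \<Rightarrow> real" where
  "frame_re p x = 1 - Re p * cos (2 * pi * x) - Im p * sin (2 * pi * x)"

definition frame_im :: "complex \<Rightarrow> real \<Rightarrow> real" where
  "frame_im p x = Re p * sin (2 * pi * x) - Im p * cos (2 * pi * x)"

text \<open>Inscribed angle theorem: the chord from circ x through p makes the angle
  arctan (frame_im p x / frame_re p x) with the diameter through circ x, so it cuts off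
  twice that angle beyond the antipode of circ x.\<close>

definition chord_end :: "complex \<Rightarrow> real \<Rightarrow> real" where
  "chord_end p x = x + 1/2 + arctan (frame_im p x / frame_re p x) / pi"

definition chord_end_deriv :: "complex \<Rightarrow> real \<Rightarrow> real" where
  "chord_end_deriv p x =
     (2 * frame_re p x - (frame_re p x)\<^sup>2 - (frame_im p x)\<^sup>2) / ((frame_re p x)\<^sup>2 + (frame_im p x)\<^sup>2)"

lemma frame_complex: "Complex (frame_re p x) (frame_im p x) = 1 - cnj (circ x) * p"
  by (simp add: complex_eq_iff frame_re_def frame_im_def Re_circ Im_circ)

lemma frame_norm: "(1 - frame_re p x)\<^sup>2 + (frame_im p x)\<^sup>2 = (norm p)\<^sup>2"
proof -
  have "Complex (1 - frame_re p x) (- frame_im p x) = cnj (circ x) * p"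
    using frame_complex[of p x] by (simp add: complex_eq_iff)
  then have "(norm p)\<^sup>2 = (norm (Complex (1 - frame_re p x) (- frame_im p x)))\<^sup>2"
    by (simp add: norm_mult)
  then show ?thesis
    by (simp add: cmod_power2)
qed

lemma frame_inject:
  assumes "frame_re p x = frame_re q x" "frame_im p x = frame_im q x"
  shows "p = q"
proof -
  have "1 - cnj (circ x) * p = 1 - cnj (circ x) * q"
    using frame_complex[of p x] frame_complex[of q x] assms by metis
  moreover have "circ x \<noteq> 0"
    using norm_circ[of x] by (auto simp del: norm_circ)
  ultimately show ?thesis
    by simp
qed

lemma frame_re_pos:
  assumes "norm p < 1"
  shows "0 < frame_re p x"
proof -
  have "frame_re p x = 1 - Re (cnj (circ x) * p)"
    using arg_cong[OF frame_complex[of p x], of Re] by simp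
  moreover have "Re (cnj (circ x) * p) < 1"
    using complex_Re_le_cmod[of "cnj (circ x) * p"] assms by (simp add: norm_mult)
  ultimately show ?thesis
    by simp
qed

lemma chord_end_deriv_pos:
  assumes "norm p < 1"
  shows "0 < chord_end_deriv p x"
proof -
  have "2 * frame_re p x - (frame_re p x)\<^sup>2 - (frame_im p x)\<^sup>2 = 1 - (norm p)\<^sup>2"
    using frame_norm[of p x] by (simp add: power2_eq_square algebra_simps)
  moreover have "(norm p)\<^sup>2 < 1"
    using assms by (simp add: power_less_one_iff)
  moreover have "0 < (frame_re p x)\<^sup>2 + (frame_im p x)\<^sup>2"
    using frame_re_pos[OF assms, of x] by (simp add: add_pos_nonneg)
  ultimately show ?thesis
    by (simp add: chord_end_deriv_def)
qed

lemma has_real_derivative_frame: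
  "(frame_re p has_real_derivative 2 * pi * frame_im p x) (at x)"
  "(frame_im p has_real_derivative 2 * pi * (1 - frame_re p x)) (at x)"
  unfolding frame_re_def[abs_def] frame_im_def[abs_def]
  by (auto intro!: derivative_eq_intros simp: algebra_simps)

lemma chord_end_deriv_algebra:
  fixes D N :: real
  assumes "0 < D"
  shows "1 + inverse (1 + (N / D)\<^sup>2) * ((2 * pi * (1 - D) * D - N * (2 * pi * N)) / D\<^sup>2) / pi
      = (2 * D - D\<^sup>2 - N\<^sup>2) / (D\<^sup>2 + N\<^sup>2)"
proof -
  have H: "D\<^sup>2 + N\<^sup>2 \<noteq> 0"
    using assms by (simp add: add_pos_nonneg)
  have "inverse (1 + (N / D)\<^sup>2) = D\<^sup>2 / (D\<^sup>2 + N\<^sup>2)"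
    using assms by (simp add: field_simps)
  moreover have "(2 * pi * (1 - D) * D - N * (2 * pi * N)) / D\<^sup>2 / pi = 2 * ((1 - D) * D - N\<^sup>2) / D\<^sup>2"
    using assms by (simp add: field_simps power2_eq_square)
  ultimately have "inverse (1 + (N / D)\<^sup>2) * ((2 * pi * (1 - D) * D - N * (2 * pi * N)) / D\<^sup>2) / pi
      = 2 * ((1 - D) * D - N\<^sup>2) / (D\<^sup>2 + N\<^sup>2)"
    using assms by (simp add: divide_simps)
  moreover have "1 + 2 * ((1 - D) * D - N\<^sup>2) / (D\<^sup>2 + N\<^sup>2) = (2 * D - D\<^sup>2 - N\<^sup>2) / (D\<^sup>2 + N\<^sup>2)"
    using H by (simp add: field_simps) (simp add: algebra_simps power2_eq_square)
  ultimately show ?thesis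
    by simp
qed

lemma chord_end_has_real_derivative:
  assumes "norm p < 1"
  shows "(chord_end p has_real_derivative chord_end_deriv p x) (at x)"
proof -
  define D N where "D = frame_re p x" and "N = frame_im p x"
  have "0 < D"
    using frame_re_pos[OF assms] by (simp add: D_def)
  have "((\<lambda>y. frame_im p y / frame_re p y) has_real_derivative
      (2 * pi * (1 - D) * D - N * (2 * pi * N)) / D\<^sup>2) (at x)"
    using DERIV_divide[OF has_real_derivative_frame(2,1)] \<open>0 < D\<close>
    by (simp add: D_def N_def power2_eq_square)
  from DERIV_chain2[OF DERIV_arctan this]
  have "((\<lambda>y. arctan (frame_im p y / frame_re p y)) has_real_derivative
      inverse (1 + (N / D)\<^sup>2) * ((2 * pi * (1 - D) * D - N * (2 * pi * N)) / D\<^sup>2)) (at x)"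
    by (simp add: D_def N_def)
  then have "(chord_end p has_real_derivative
      1 + 0 + inverse (1 + (N / D)\<^sup>2) * ((2 * pi * (1 - D) * D - N * (2 * pi * N)) / D\<^sup>2) / pi) (at x)"
    unfolding chord_end_def[abs_def] by (intro DERIV_add DERIV_cdivide DERIV_ident DERIV_const)
  then show ?thesis
    using chord_end_deriv_algebra[OF \<open>0 < D\<close>, of N]
    by (simp add: chord_end_deriv_def D_def N_def)
qed

lemma continuous_on_chord_end: "norm p < 1 \<Longrightarrow> continuous_on UNIV (chord_end p)"
  by (meson DERIV_isCont chord_end_has_real_derivative continuous_at_imp_continuous_on)

lemma strict_mono_chord_end: "norm p < 1 \<Longrightarrow> strict_mono (chord_end p)"
  by (metis DERIV_pos_imp_increasing chord_end_has_real_derivative chord_end_deriv_pos strict_monoI)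

lemma chord_end_bounds: "x < chord_end p x" "chord_end p x < x + 1"
proof -
  have "-(pi / 2) < arctan (frame_im p x / frame_re p x)" "arctan (frame_im p x / frame_re p x) < pi / 2"
    using arctan_bounded by auto
  then have "-(1 / 2) < arctan (frame_im p x / frame_re p x) / pi"
    "arctan (frame_im p x / frame_re p x) / pi < 1 / 2"
    by (simp_all add: field_simps)
  then show "x < chord_end p x" "chord_end p x < x + 1"
    unfolding chord_end_def by linarith+
qed

lemma chord_end_add_1: "chord_end p (x + 1) = chord_end p x + 1"
proof -
  have "cos (2 * pi * (x + 1)) = cos (2 * pi * x)" "sin (2 * pi * (x + 1)) = sin (2 * pi * x)"
    by (simp_all add: distrib_left)
  then show ?thesis
    by (simp add: chord_end_def frame_re_def frame_im_def)
qed

lemma Im_chord_frame: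
  "Im (cnj (circ (x + t) - circ x) * (p - circ x))
     = sin (2 * pi * t) * frame_re p x + (1 - cos (2 * pi * t)) * frame_im p x"
proof -
  have "circ (x + t) = circ x * circ t"
    by (simp add: circ_def cis_mult distrib_left)
  moreover have "cnj (circ x) * circ x = 1"
    by (metis complex_norm_square mult.commute norm_circ of_real_1 power_one)
  ultimately have "cnj (circ (x + t) - circ x) * (p - circ x) = (1 - cnj (circ t)) * (1 - cnj (circ x) * p)"
    by (simp add: algebra_simps)
  also have "\<dots> = (1 - cnj (circ t)) * Complex (frame_re p x) (frame_im p x)"
    by (simp only: frame_complex)
  finally show ?thesis
    by (simp add: Re_circ Im_circ)
qed

lemma sgn_cos_eq:
  assumes "-(pi / 2) < y" "y < 3 * pi / 2"
  shows "sgn (cos y) = sgn (pi / 2 - y)"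
proof -
  consider "y < pi / 2" | "y = pi / 2" | "pi / 2 < y"
    by linarith
  then show ?thesis
  proof cases
    case 1
    then show ?thesis
      using cos_gt_zero_pi[of y] assms by simp
  next
    case 2
    then show ?thesis
      unfolding 2 by simp
  next
    case 3
    then have "0 < cos (y - pi)"
      using cos_gt_zero_pi[of "y - pi"] assms by simp
    then show ?thesis
      using 3 by (simp add: cos_diff)
  qed
qed

lemma sgn_Im_chord:
  assumes "norm p < 1" "0 < t" "t < 1"
  shows "sgn (Im (cnj (circ (x + t) - circ x) * (p - circ x))) = sgn (chord_end p x - (x + t))"
proof -
  define D N where "D = frame_re p x" and "N = frame_im p x"
  define b where "b = arctan (N / D)"
  have "0 < D"
    using frame_re_pos[OF assms(1)] by (simp add: D_def)
  have "0 < cos b"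
    by (simp add: b_def cos_arctan add_pos_nonneg)
  have "sin b = N / D * cos b"
    using tan_arctan[of "N / D"] \<open>0 < cos b\<close> by (simp add: b_def tan_def field_simps)
  have "0 < sin (pi * t)"
    using assms(2,3) by (intro sin_gt_zero) auto
  have "Im (cnj (circ (x + t) - circ x) * (p - circ x)) = sin (2 * pi * t) * D + (1 - cos (2 * pi * t)) * N"
    unfolding D_def N_def by (rule Im_chord_frame)
  also have "\<dots> = 2 * sin (pi * t) * cos (pi * t) * D + 2 * (sin (pi * t))\<^sup>2 * N"
    using sin_double[of "pi * t"] cos_double_sin[of "pi * t"] by (simp add: mult.assoc)
  also have "\<dots> = 2 * sin (pi * t) * D / cos b * cos (pi * t - b)"
    using \<open>0 < cos b\<close> \<open>0 < D\<close> \<open>sin b = N / D * cos b\<close>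
    by (simp add: cos_diff field_simps power2_eq_square)
  finally have Im_eq:
    "Im (cnj (circ (x + t) - circ x) * (p - circ x)) = 2 * sin (pi * t) * D / cos b * cos (pi * t - b)" .
  have "-(pi / 2) < b" "b < pi / 2"
    using arctan_bounded by (auto simp: b_def)
  moreover have "0 < pi * t" "pi * t < pi"
    using assms(2,3) by simp_all
  ultimately have "sgn (cos (pi * t - b)) = sgn (pi / 2 - (pi * t - b))"
    by (intro sgn_cos_eq) linarith+
  also have "pi / 2 - (pi * t - b) = pi * (chord_end p x - (x + t))"
    by (simp add: chord_end_def b_def D_def N_def field_simps)
  finally show ?thesis
    unfolding Im_eq using \<open>0 < cos b\<close> \<open>0 < D\<close> \<open>0 < sin (pi * t)\<close> by (simp add: sgn_mult)
qed

lemma left_of_circ_iff: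
  assumes "norm p < 1" "0 < t" "t < 1"
  shows "left_of (circ x) (circ (x + t)) p \<longleftrightarrow> x + t \<le> chord_end p x"
  using sgn_Im_chord[OF assms, of x] unfolding left_of_def
  by (metis diff_ge_0_iff_ge zero_le_sgn_iff)

lemma Im_chord_pos_iff:
  assumes "norm p < 1" "0 < t" "t < 1"
  shows "0 < Im (cnj (circ (x + t) - circ x) * (p - circ x)) \<longleftrightarrow> x + t < chord_end p x"
  using sgn_Im_chord[OF assms, of x] by (metis diff_gt_0_iff_gt sgn_greater)

lemma on_line_circ_iff:
  assumes "norm p < 1" "0 < t" "t < 1"
  shows "p \<in> line_through (circ x) (circ (x + t)) \<longleftrightarrow> chord_end p x = x + t"
  using sgn_Im_chord[OF assms, of x] line_through_iff_Im[OF circ_add_neq[OF assms(2,3)]]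
  by (metis eq_iff_diff_eq_0 sgn_eq_0_iff)

lemma chord_end_deriv_alt:
  assumes "norm p < 1"
  shows "chord_end_deriv p x = 2 / (frame_re p x * (1 + (frame_im p x / frame_re p x)\<^sup>2)) - 1"
proof -
  define D N where "D = frame_re p x" and "N = frame_im p x"
  have "0 < D"
    using frame_re_pos[OF assms] by (simp add: D_def)
  then have e: "D * (1 + (N / D)\<^sup>2) = (D\<^sup>2 + N\<^sup>2) / D" and H: "D\<^sup>2 + N\<^sup>2 \<noteq> 0"
    by (simp_all add: field_simps power2_eq_square add_pos_nonneg)
  then have "2 / (D * (1 + (N / D)\<^sup>2)) - 1 = 2 * D / (D\<^sup>2 + N\<^sup>2) - (D\<^sup>2 + N\<^sup>2) / (D\<^sup>2 + N\<^sup>2)"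
    by (simp only: e divide_divide_eq_right divide_self[OF H])
  also have "\<dots> = (2 * D - D\<^sup>2 - N\<^sup>2) / (D\<^sup>2 + N\<^sup>2)"
    by (simp only: diff_divide_distrib[symmetric] diff_diff_eq)
  finally show ?thesis
    by (simp add: chord_end_deriv_def D_def N_def)
qed

lemma chord_end_deriv_neq:
  assumes "norm p < 1" "norm q < 1" "p \<noteq> q" "chord_end p x = chord_end q x"
  shows "chord_end_deriv p x \<noteq> chord_end_deriv q x"
proof
  assume deriv_eq: "chord_end_deriv p x = chord_end_deriv q x"
  define k where "k = frame_im p x / frame_re p x"
  have "arctan k = arctan (frame_im q x / frame_re q x)"
    using assms(4) by (simp add: chord_end_def k_def)
  then have k: "frame_im q x / frame_re q x = k"
    by (metis tan_arctan)
  have "2 / (frame_re p x * (1 + k\<^sup>2)) = 2 / (frame_re q x * (1 + k\<^sup>2))"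
    using deriv_eq chord_end_deriv_alt[OF assms(1)] chord_end_deriv_alt[OF assms(2)] k
    by (simp add: k_def)
  moreover have "0 < 1 + k\<^sup>2"
    by (simp add: add_pos_nonneg)
  ultimately have "frame_re p x = frame_re q x"
    by simp
  moreover have "frame_im p x = frame_im q x"
    using k calculation frame_re_pos[OF assms(1), of x] by (simp add: k_def field_simps)
  ultimately show False
    using frame_inject assms(3) by blast
qed

lemma chord_ends_meet:
  assumes "norm p < 1" "norm q < 1"
  shows "\<exists>x. chord_end p x = chord_end q x"
proof (cases "p = q")
  case False
  obtain d where "0 < d" and "p + d *\<^sub>R (q - p) \<in> sphere 0 1"
    using ray_to_frontier[where S = "ball 0 1" and a = p and l = "q - p"] assms False by auto
  then obtain x where x: "circ x = p + d *\<^sub>R (q - p)"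
    using sphere_eq_range_circ by auto
  define t where "t = chord_end p x - x"
  have t: "0 < t" "t < 1"
    using chord_end_bounds[where p = p and x = x] by (simp_all add: t_def)
  have "chord_end p x = x + t"
    by (simp add: t_def)
  then have "Im (cnj (circ (x + t) - circ x) * (p - circ x)) = 0"
    using on_line_circ_iff[OF assms(1) t] line_through_iff_Im[OF circ_add_neq[OF t]] by blast
  moreover have "q - circ x = ((d - 1) / d) *\<^sub>R (p - circ x)"
    using \<open>0 < d\<close> by (simp add: x scaleR_conv_of_real field_simps)
  ultimately have "Im (cnj (circ (x + t) - circ x) * (q - circ x)) = 0"
    by (simp only: mult_scaleR_right scaleR_complex.sel mult_zero_right)
  then have "chord_end q x = x + t"
    using on_line_circ_iff[OF assms(2) t] line_through_iff_Im[OF circ_add_neq[OF t]] by blast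
  then show ?thesis
    using \<open>chord_end p x = x + t\<close> by metis
qed simp

section \<open>The map psi of a polygon\<close>

definition psi_lift :: "complex set \<Rightarrow> real \<Rightarrow> real" where
  "psi_lift P x = Min ((\<lambda>p. chord_end p x) ` P)"

lemma psi_lift_le: "finite P \<Longrightarrow> p \<in> P \<Longrightarrow> psi_lift P x \<le> chord_end p x"
  by (simp add: psi_lift_def)

lemma le_psi_lift_iff: "finite P \<Longrightarrow> P \<noteq> {} \<Longrightarrow> y \<le> psi_lift P x \<longleftrightarrow> (\<forall>p\<in>P. y \<le> chord_end p x)"
  by (simp add: psi_lift_def)

lemma psi_lift_attained: "finite P \<Longrightarrow> P \<noteq> {} \<Longrightarrow> \<exists>p\<in>P. chord_end p x = psi_lift P x"
  unfolding psi_lift_def by (metis (mono_tags, lifting) Min_in finite_imageI image_iff image_is_empty)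

lemma psi_lift_Un:
  "finite A \<Longrightarrow> A \<noteq> {} \<Longrightarrow> finite B \<Longrightarrow> B \<noteq> {} \<Longrightarrow> psi_lift (A \<union> B) x = min (psi_lift A x) (psi_lift B x)"
  by (simp add: psi_lift_def image_Un Min_Un)

lemma psi_lift_singleton [simp]: "psi_lift {p} = chord_end p"
  by (simp add: psi_lift_def fun_eq_iff)

lemma psi_lift_bounds:
  assumes "finite P" "P \<noteq> {}"
  shows "x < psi_lift P x" "psi_lift P x < x + 1"
proof -
  obtain p where "chord_end p x = psi_lift P x"
    using psi_lift_attained[OF assms] by blast
  then show "x < psi_lift P x" "psi_lift P x < x + 1"
    using chord_end_bounds[where p = p and x = x] by simp_all
qed

lemma psi_lift_add_1:
  assumes "finite P" "P \<noteq> {}"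
  shows "psi_lift P (x + 1) = psi_lift P x + 1"
proof -
  have "(\<lambda>p. chord_end p (x + 1)) ` P = (\<lambda>y. y + 1) ` (\<lambda>p. chord_end p x) ` P"
    by (auto simp: chord_end_add_1 image_image)
  then show ?thesis
    using assms by (simp add: psi_lift_def mono_Min_commute[symmetric] mono_def)
qed

lemma strict_mono_psi_lift:
  assumes "finite P" "P \<noteq> {}" "P \<subseteq> ball 0 1"
  shows "strict_mono (psi_lift P)"
proof (rule strict_monoI)
  fix x y :: real assume "x < y"
  obtain p where "p \<in> P" "chord_end p y = psi_lift P y"
    using psi_lift_attained[OF assms(1,2)] by blast
  moreover have "chord_end p x < chord_end p y"
    using strict_monoD[OF strict_mono_chord_end \<open>x < y\<close>] \<open>p \<in> P\<close> assms(3) by auto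
  ultimately show "psi_lift P x < psi_lift P y"
    using psi_lift_le[OF assms(1) \<open>p \<in> P\<close>, of x] by linarith
qed

lemma continuous_on_psi_lift:
  assumes "finite P" "P \<subseteq> ball 0 1"
  shows "continuous_on UNIV (psi_lift P)"
  using assms
proof (induction P rule: finite_induct)
  case (insert p Q)
  show ?case
  proof (cases "Q = {}")
    case True
    then show ?thesis
      using insert.prems by (simp add: continuous_on_chord_end)
  next
    case False
    then have "psi_lift (insert p Q) = (\<lambda>x. min (chord_end p x) (psi_lift Q x))"
      using psi_lift_Un[of "{p}" Q] insert.hyps(1) by (simp add: fun_eq_iff)
    then show ?thesis
      using insert by (simp add: continuous_on_min continuous_on_chord_end)
  qed
qed (simp add: psi_lift_def)

lemma convex_Im_halfplanes: "convex {z. 0 \<le> Im (c * (z - v))}" "convex {z. 0 < Im (c * (z - v))}"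
proof -
  have "Im (c * (z - v)) = inner (\<i> * cnj c) z - Im (c * v)" for z
    by (simp add: inner_complex_def algebra_simps)
  then show "convex {z. 0 \<le> Im (c * (z - v))}" "convex {z. 0 < Im (c * (z - v))}"
    using convex_halfspace_ge[of "Im (c * v)" "\<i> * cnj c"] convex_halfspace_gt[of "Im (c * v)" "\<i> * cnj c"]
    by simp_all
qed

lemma isCont_psi_lift: "finite P \<Longrightarrow> P \<subseteq> ball 0 1 \<Longrightarrow> isCont (psi_lift P) x"
  using continuous_on_psi_lift by (simp add: continuous_on_eq_continuous_at)

lemma hull_left_of_iff:
  assumes "finite P" "P \<noteq> {}" "P \<subseteq> ball 0 1" "0 < t" "t < 1"
  shows "(\<forall>z\<in>convex hull P. left_of (circ x) (circ (x + t)) z) \<longleftrightarrow> x + t \<le> psi_lift P x"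
proof -
  have left_iff: "left_of (circ x) (circ (x + t)) p \<longleftrightarrow> x + t \<le> chord_end p x" if "p \<in> P" for p
  proof -
    have "norm p < 1"
      using that assms(3) by auto
    then show ?thesis
      using left_of_circ_iff assms(4,5) by blast
  qed
  show ?thesis
  proof
    assume "\<forall>z\<in>convex hull P. left_of (circ x) (circ (x + t)) z"
    then have "\<forall>p\<in>P. x + t \<le> chord_end p x"
      using hull_inc[of _ P convex] left_iff by blast
    then show "x + t \<le> psi_lift P x"
      using le_psi_lift_iff[OF assms(1,2)] by blast
  next
    assume "x + t \<le> psi_lift P x"
    then have "P \<subseteq> {z. left_of (circ x) (circ (x + t)) z}"
      using left_iff psi_lift_le[OF assms(1), of _ x] by force
    then have "convex hull P \<subseteq> {z. left_of (circ x) (circ (x + t)) z}"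
      by (rule hull_minimal) (unfold left_of_def, rule convex_Im_halfplanes)
    then show "\<forall>z\<in>convex hull P. left_of (circ x) (circ (x + t)) z"
      by blast
  qed
qed

lemma line_meets_hull_iff:
  assumes "finite P" "P \<noteq> {}" "P \<subseteq> ball 0 1" "0 < t" "t < 1" "x + t \<le> psi_lift P x"
  shows "line_through (circ x) (circ (x + t)) \<inter> convex hull P \<noteq> {} \<longleftrightarrow> x + t = psi_lift P x"
proof
  assume meets: "line_through (circ x) (circ (x + t)) \<inter> convex hull P \<noteq> {}"
  show "x + t = psi_lift P x"
  proof (rule ccontr)
    let ?H = "{z. 0 < Im (cnj (circ (x + t) - circ x) * (z - circ x))}"
    assume "x + t \<noteq> psi_lift P x"
    have "p \<in> ?H" if "p \<in> P" for p
    proof -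
      have "norm p < 1"
        using that assms(3) by auto
      moreover have "x + t < chord_end p x"
        using psi_lift_le[OF assms(1) that, of x] assms(6) \<open>x + t \<noteq> psi_lift P x\<close> by linarith
      ultimately show ?thesis
        using Im_chord_pos_iff[OF _ assms(4,5)] by blast
    qed
    then have "convex hull P \<subseteq> ?H"
      by (intro hull_minimal subsetI convex_Im_halfplanes)
    moreover obtain z where "z \<in> line_through (circ x) (circ (x + t))" "z \<in> convex hull P"
      using meets by blast
    ultimately show False
      using line_through_iff_Im[OF circ_add_neq[OF assms(4,5)]] by force
  qed
next
  assume "x + t = psi_lift P x"
  moreover obtain p where "p \<in> P" "chord_end p x = psi_lift P x"
    using psi_lift_attained[OF assms(1,2)] by blast
  moreover have "norm p < 1"
    using \<open>p \<in> P\<close> assms(3) by auto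
  ultimately have "p \<in> line_through (circ x) (circ (x + t))"
    using on_line_circ_iff[OF _ assms(4,5)] by metis
  then show "line_through (circ x) (circ (x + t)) \<inter> convex hull P \<noteq> {}"
    using hull_inc[OF \<open>p \<in> P\<close>] by blast
qed

lemma psi_convex_hull_circ:
  assumes "finite P" "P \<noteq> {}" "P \<subseteq> ball 0 1"
  shows "psi (convex hull P) (circ x) = circ (psi_lift P x)"
proof -
  have "w \<in> sphere 0 1 \<and> w \<noteq> circ x \<and> line_through (circ x) w \<inter> convex hull P \<noteq> {}
      \<and> (\<forall>z\<in>convex hull P. left_of (circ x) w z) \<longleftrightarrow> w = circ (psi_lift P x)" for w
  proof
    assume w: "w \<in> sphere 0 1 \<and> w \<noteq> circ x \<and> line_through (circ x) w \<inter> convex hull P \<noteq> {}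
      \<and> (\<forall>z\<in>convex hull P. left_of (circ x) w z)"
    then obtain t where t: "0 < t" "t < 1" "w = circ (x + t)"
      using sphere_eq_circ_add by blast
    then have "x + t \<le> psi_lift P x"
      using w hull_left_of_iff[OF assms t(1,2), where x = x] by simp
    then have "x + t = psi_lift P x"
      using w t line_meets_hull_iff[OF assms t(1,2), where x = x] by simp
    then show "w = circ (psi_lift P x)"
      by (simp add: t(3))
  next
    define t where "t = psi_lift P x - x"
    have t: "0 < t" "t < 1"
      using psi_lift_bounds[OF assms(1,2), of x] by (simp_all add: t_def)
    have "x + t = psi_lift P x"
      by (simp add: t_def)
    then have "(\<forall>z\<in>convex hull P. left_of (circ x) (circ (x + t)) z)"
      and "line_through (circ x) (circ (x + t)) \<inter> convex hull P \<noteq> {}"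
      using hull_left_of_iff[OF assms t, where x = x] line_meets_hull_iff[OF assms t, where x = x]
      by simp_all
    moreover assume "w = circ (psi_lift P x)"
    ultimately show "w \<in> sphere 0 1 \<and> w \<noteq> circ x \<and> line_through (circ x) w \<inter> convex hull P \<noteq> {}
      \<and> (\<forall>z\<in>convex hull P. left_of (circ x) w z)"
      using circ_add_neq[OF t, of x] \<open>x + t = psi_lift P x\<close> by simp
  qed
  then show ?thesis
    unfolding psi_def by simp
qed

lemma circle_lift_psi_convex_hull:
  assumes "finite P" "P \<noteq> {}" "P \<subseteq> ball 0 1"
  shows "circle_lift (psi (convex hull P)) = psi_lift P"
proof (rule circle_lift_unique)
  show "continuous_on UNIV (psi_lift P)"
    using assms(1,3) by (rule continuous_on_psi_lift)
  show "psi (convex hull P) (circ x) = circ (psi_lift P x)" for x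
    using assms by (rule psi_convex_hull_circ)
  show "0 \<le> psi_lift P 0" "psi_lift P 0 < 1"
    using psi_lift_bounds[OF assms(1,2), of 0] by simp_all
qed

lemma circle_homeo_lift_psi_lift:
  assumes "finite P" "P \<noteq> {}" "P \<subseteq> ball 0 1"
  shows "circle_homeo_lift (psi_lift P)"
  using assms by unfold_locales (simp_all add: strict_mono_psi_lift continuous_on_psi_lift psi_lift_add_1)

section \<open>Corners of the lift\<close>

lemma tendsto_Min_finite:
  fixes g :: "'a \<Rightarrow> 'b \<Rightarrow> real"
  assumes "finite A" "A \<noteq> {}" "\<And>a. a \<in> A \<Longrightarrow> (g a \<longlongrightarrow> l a) F"
  shows "((\<lambda>y. Min ((\<lambda>a. g a y) ` A)) \<longlongrightarrow> Min (l ` A)) F"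
  using assms
proof (induction A rule: finite_ne_induct)
  case (insert a A)
  then show ?case
    by (simp add: Min_insert tendsto_min)
qed simp

lemma tendsto_Max_finite:
  fixes g :: "'a \<Rightarrow> 'b \<Rightarrow> real"
  assumes "finite A" "A \<noteq> {}" "\<And>a. a \<in> A \<Longrightarrow> (g a \<longlongrightarrow> l a) F"
  shows "((\<lambda>y. Max ((\<lambda>a. g a y) ` A)) \<longlongrightarrow> Max (l ` A)) F"
  using assms
proof (induction A rule: finite_ne_induct)
  case (insert a A)
  then show ?case
    by (simp add: Max_insert tendsto_max)
qed simp

lemma Min_diff_divide_pos:
  fixes S :: "real set"
  assumes "finite S" "S \<noteq> {}" "0 < d"
  shows "(Min S - c) / d = Min ((\<lambda>s. (s - c) / d) ` S)"
  using assms by (intro mono_Min_commute) (auto intro!: monoI divide_right_mono)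

lemma Min_diff_divide_neg:
  fixes S :: "real set"
  assumes "finite S" "S \<noteq> {}" "d < 0"
  shows "(Min S - c) / d = Max ((\<lambda>s. (s - c) / d) ` S)"
proof -
  have "(Min S - c) / d = - ((Min S - c) / (- d))"
    by simp
  also have "\<dots> = - Min ((\<lambda>s. (s - c) / (- d)) ` S)"
    using assms by (subst Min_diff_divide_pos) auto
  also have "\<dots> = Max (uminus ` (\<lambda>s. (s - c) / (- d)) ` S)"
    using assms by (intro minus_Min_eq_Max) auto
  finally show ?thesis
    by (simp add: image_image)
qed

lemma has_real_derivative_Min_one_sided:
  fixes g :: "'a \<Rightarrow> real \<Rightarrow> real" and g' :: "'a \<Rightarrow> real"
  assumes "finite A" "A \<noteq> {}"
    and "\<And>a. a \<in> A \<Longrightarrow> (g a has_real_derivative g' a) (at x)"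
    and "\<And>a. a \<in> A \<Longrightarrow> g a x = c"
  shows "((\<lambda>y. Min ((\<lambda>a. g a y) ` A)) has_real_derivative Min (g' ` A)) (at_right x)"
    and "((\<lambda>y. Min ((\<lambda>a. g a y) ` A)) has_real_derivative Max (g' ` A)) (at_left x)"
proof -
  have at_x: "Min ((\<lambda>a. g a x) ` A) = c"
    using assms(2,4) by (simp cong: image_cong add: image_constant_conv)
  have quotient_eq: "(Min ((\<lambda>a. g a y) ` A) - Min ((\<lambda>a. g a x) ` A)) / (y - x)
      = (if x < y then Min else Max) ((\<lambda>a. (g a y - g a x) / (y - x)) ` A)" if "y \<noteq> x" for y
    using that assms(1,2,4)
    by (cases "x < y") (simp_all add: at_x Min_diff_divide_pos Min_diff_divide_neg image_image)
  have quotient_tendsto: "((\<lambda>y. (g a y - g a x) / (y - x)) \<longlongrightarrow> g' a) (at x within S)" if "a \<in> A" for a S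
    using has_field_derivative_at_within[OF assms(3)[OF that]] by (simp add: has_field_derivative_iff)
  have "eventually (\<lambda>y. x < y) (at_right x)" "eventually (\<lambda>y. y < x) (at_left x)"
    by (simp_all add: eventually_at_filter)
  then show "((\<lambda>y. Min ((\<lambda>a. g a y) ` A)) has_real_derivative Min (g' ` A)) (at_right x)"
    and "((\<lambda>y. Min ((\<lambda>a. g a y) ` A)) has_real_derivative Max (g' ` A)) (at_left x)"
    unfolding has_field_derivative_iff
    by (auto intro!: Lim_transform_eventually[OF tendsto_Min_finite[OF assms(1,2) quotient_tendsto]]
        Lim_transform_eventually[OF tendsto_Max_finite[OF assms(1,2) quotient_tendsto]]
        elim!: eventually_mono simp: quotient_eq)
qed

lemma funpow_one_sided_derivatives:
  fixes F R L :: "real \<Rightarrow> real"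
  assumes "strict_mono F"
    and "\<And>x. (F has_real_derivative R x) (at_right x)"
    and "\<And>x. (F has_real_derivative L x) (at_left x)"
    and "\<And>x. 0 < R x" "\<And>x. R x \<le> L x"
  shows "\<exists>l r. ((F ^^ n) has_real_derivative l) (at_left x) \<and> ((F ^^ n) has_real_derivative r) (at_right x)
    \<and> 0 < r \<and> r \<le> l \<and> (0 < n \<and> R x < L x \<longrightarrow> r < l)"
proof (induction n arbitrary: x)
  case 0
  show ?case
    by (intro exI[of _ 1]) (auto intro!: derivative_eq_intros)
next
  case (Suc n)
  obtain l r where lr: "((F ^^ n) has_real_derivative l) (at_left (F x))"
      "((F ^^ n) has_real_derivative r) (at_right (F x))" "0 < r" "r \<le> l"
    using Suc.IH[of "F x"] by blast
  have "F ` {x<..} \<subseteq> {F x<..}" "F ` {..<x} \<subseteq> {..<F x}"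
    using assms(1) by (auto dest: strict_monoD)
  then have "((F ^^ n) \<circ> F has_real_derivative r * R x) (at_right x)"
    and "((F ^^ n) \<circ> F has_real_derivative l * L x) (at_left x)"
    using DERIV_image_chain[OF DERIV_subset[OF lr(2)] assms(2)] DERIV_image_chain[OF DERIV_subset[OF lr(1)] assms(3)]
    by auto
  moreover have "0 < r * R x" "r * R x \<le> l * L x"
    using lr assms(4,5)[of x] by (auto intro: mult_mono)
  moreover have "r * R x < l * L x" if "R x < L x"
  proof -
    have "r * R x < r * L x"
      using lr(3) that by simp
    also have "\<dots> \<le> l * L x"
      using lr(4) assms(4,5)[of x] by (intro mult_right_mono) auto
    finally show ?thesis .
  qed
  ultimately show ?case
    unfolding funpow_Suc_right by blast
qed

lemma one_sided_derivative_unique: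
  fixes f :: "real \<Rightarrow> real"
  assumes "(f has_real_derivative a) (at x within S)" "(f has_real_derivative b) (at x within S)"
    and "at x within S \<noteq> bot"
  shows "a = b"
  using tendsto_unique[OF assms(3)] assms(1,2) unfolding has_field_derivative_iff by blast

lemma funpow_not_translation_if_corner:
  fixes F R L :: "real \<Rightarrow> real"
  assumes "strict_mono F"
    and "\<And>x. (F has_real_derivative R x) (at_right x)"
    and "\<And>x. (F has_real_derivative L x) (at_left x)"
    and "\<And>x. 0 < R x" "\<And>x. R x \<le> L x"
    and "R x0 < L x0" "0 < n"
  shows "F ^^ n \<noteq> (\<lambda>x. x + c)"
proof
  assume translation: "F ^^ n = (\<lambda>x. x + c)"
  obtain l r where "((\<lambda>x. x + c) has_real_derivative l) (at_left x0)"
      "((\<lambda>x. x + c) has_real_derivative r) (at_right x0)" "r < l"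
    using funpow_one_sided_derivatives[OF assms(1-5), of n x0] assms(6,7) unfolding translation by blast
  moreover have "((\<lambda>x. x + c) has_real_derivative 1) (at x0 within S)" for S
    by (auto intro!: derivative_eq_intros)
  ultimately have "l = 1" "r = 1"
    by (auto intro: one_sided_derivative_unique)
  then show False
    using \<open>r < l\<close> by simp
qed

definition active :: "complex set \<Rightarrow> real \<Rightarrow> complex set" where
  "active P x = {p \<in> P. chord_end p x = psi_lift P x}"

lemma active_nonempty: "finite P \<Longrightarrow> P \<noteq> {} \<Longrightarrow> active P x \<noteq> {}"
  using psi_lift_attained by (fastforce simp: active_def)

lemma psi_lift_active:
  assumes "finite P" "P \<noteq> {}"
  shows "psi_lift (active P x) x = psi_lift P x"
proof -
  have "(\<lambda>p. chord_end p x) ` active P x = {psi_lift P x}"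
    using active_nonempty[OF assms, of x] by (auto simp: active_def)
  then show ?thesis
    by (simp add: psi_lift_def[of "active P x"])
qed

lemma eventually_psi_lift_eq_active:
  assumes "finite P" "P \<noteq> {}" "P \<subseteq> ball 0 1"
  shows "eventually (\<lambda>y. psi_lift (active P x) y = psi_lift P y) (at x)"
proof (cases "P - active P x = {}")
  case True
  then have "active P x = P"
    by (auto simp: active_def)
  then show ?thesis
    by simp
next
  case False
  let ?A = "active P x" and ?B = "P - active P x"
  have fin: "finite ?A" "finite ?B" and ne: "?A \<noteq> {}"
    using assms active_nonempty by (auto simp: active_def)
  obtain p where "p \<in> ?B" "chord_end p x = psi_lift ?B x"
    using psi_lift_attained[OF fin(2) False] by blast
  then have "psi_lift ?A x < psi_lift ?B x"
    using psi_lift_le[OF assms(1), of p x] psi_lift_active[OF assms(1,2)] by (auto simp: active_def)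
  moreover have "isCont (\<lambda>y. psi_lift ?B y - psi_lift ?A y) x"
    using assms fin by (intro continuous_intros isCont_psi_lift) (auto simp: active_def)
  ultimately have "eventually (\<lambda>y. 0 < psi_lift ?B y - psi_lift ?A y) (at x)"
    by (intro order_tendstoD(1)) (auto simp: isCont_def)
  moreover have "P = ?A \<union> ?B"
    by (auto simp: active_def)
  ultimately show ?thesis
    using psi_lift_Un[OF fin(1) ne fin(2) False] by (auto elim!: eventually_mono)
qed

lemma psi_lift_one_sided_derivatives:
  assumes "finite P" "P \<noteq> {}" "P \<subseteq> ball 0 1"
  shows "(psi_lift P has_real_derivative Min ((\<lambda>p. chord_end_deriv p x) ` active P x)) (at_right x)"
    and "(psi_lift P has_real_derivative Max ((\<lambda>p. chord_end_deriv p x) ` active P x)) (at_left x)"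
proof -
  have A: "finite (active P x)" "active P x \<noteq> {}" "active P x \<subseteq> ball 0 1"
    using assms active_nonempty by (auto simp: active_def)
  have derivs: "(chord_end p has_real_derivative chord_end_deriv p x) (at x)" if "p \<in> active P x" for p
    using that A(3) by (intro chord_end_has_real_derivative) auto
  have "chord_end p x = psi_lift P x" if "p \<in> active P x" for p
    using that by (simp add: active_def)
  note one_sided = has_real_derivative_Min_one_sided[where g = chord_end and g' = "\<lambda>p. chord_end_deriv p x",
      OF A(1,2) derivs this, folded psi_lift_def]
  have "eventually (\<lambda>y. psi_lift (active P x) y = psi_lift P y) (at x within S)" for S
    using filter_leD[OF at_le[OF subset_UNIV] eventually_psi_lift_eq_active[OF assms, of x]] by simp
  note cong = has_field_derivative_cong_eventually[OF this psi_lift_active[OF assms(1,2)]]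
  show "(psi_lift P has_real_derivative Min ((\<lambda>p. chord_end_deriv p x) ` active P x)) (at_right x)"
    and "(psi_lift P has_real_derivative Max ((\<lambda>p. chord_end_deriv p x) ` active P x)) (at_left x)"
    using one_sided by (simp_all add: cong)
qed

lemma exists_chord_end_eq_psi_lift:
  assumes "finite Q" "Q \<noteq> {}" "Q \<subseteq> ball 0 1" "norm p < 1" "chord_end p x0 \<le> psi_lift Q x0"
  obtains x where "chord_end p x = psi_lift Q x"
proof -
  define phi where "phi y = psi_lift Q y - chord_end p y" for y
  obtain q where "q \<in> Q"
    using assms(2) by blast
  moreover have "norm q < 1"
    using \<open>q \<in> Q\<close> assms(3) by auto
  ultimately obtain x1 where "chord_end p x1 = chord_end q x1"
    using chord_ends_meet[OF assms(4)] by blast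
  then have "phi x1 \<le> 0"
    using psi_lift_le[OF assms(1) \<open>q \<in> Q\<close>, of x1] by (simp add: phi_def)
  moreover have "0 \<le> phi x0"
    using assms(5) by (simp add: phi_def)
  moreover have "continuous_on UNIV phi"
    unfolding phi_def[abs_def] using assms(1,3,4)
    by (intro continuous_on_diff continuous_on_psi_lift continuous_on_chord_end)
  ultimately obtain x where "phi x = 0"
    using exists_zero_if_sign_change by metis
  then show ?thesis
    using that[of x] by (simp add: phi_def)
qed

lemma exists_two_active:
  assumes "finite P" "P \<subseteq> ball 0 1" "2 \<le> card P"
  obtains x p q where "p \<in> active P x" "q \<in> active P x" "p \<noteq> q"
proof -
  have "P \<noteq> {}"
    using assms(3) by auto
  then obtain p where "p \<in> active P 0"
    using active_nonempty[OF assms(1)] by blast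
  define Q where "Q = P - {p}"
  have "p \<in> P" "norm p < 1" and Q: "finite Q" "Q \<subseteq> ball 0 1"
    using \<open>p \<in> active P 0\<close> assms(1,2) by (auto simp: active_def Q_def)
  have "Q \<noteq> {}"
  proof
    assume "Q = {}"
    then have "P = {p}"
      using \<open>p \<in> P\<close> by (auto simp: Q_def)
    then show False
      using assms(3) by simp
  qed
  have "P = {p} \<union> Q"
    using \<open>p \<in> P\<close> by (auto simp: Q_def)
  then have psi_lift_P: "psi_lift P y = min (chord_end p y) (psi_lift Q y)" for y
    using psi_lift_Un[OF _ _ Q(1) \<open>Q \<noteq> {}\<close>, of "{p}"] by simp
  then have "chord_end p 0 = min (chord_end p 0) (psi_lift Q 0)"
    using \<open>p \<in> active P 0\<close> by (simp add: active_def)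
  then have "chord_end p 0 \<le> psi_lift Q 0"
    by (metis min.cobounded2)
  then obtain x where x: "chord_end p x = psi_lift Q x"
    using exists_chord_end_eq_psi_lift[OF Q(1) \<open>Q \<noteq> {}\<close> Q(2) \<open>norm p < 1\<close>] by blast
  obtain q where "q \<in> Q" "chord_end q x = psi_lift Q x"
    using psi_lift_attained[OF Q(1) \<open>Q \<noteq> {}\<close>] by blast
  then have "p \<in> active P x" "q \<in> active P x" "p \<noteq> q"
    using \<open>p \<in> P\<close> x psi_lift_P[of x] by (auto simp: active_def Q_def)
  then show ?thesis
    using that by blast
qed

lemma exists_corner:
  assumes "finite P" "P \<subseteq> ball 0 1" "2 \<le> card P"
  obtains x where "Min ((\<lambda>p. chord_end_deriv p x) ` active P x) < Max ((\<lambda>p. chord_end_deriv p x) ` active P x)"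
proof -
  obtain x p q where pq: "p \<in> active P x" "q \<in> active P x" "p \<noteq> q"
    using exists_two_active[OF assms] .
  then have neq: "chord_end_deriv p x \<noteq> chord_end_deriv q x"
    using assms(2) by (intro chord_end_deriv_neq) (auto simp: active_def)
  let ?D = "(\<lambda>p. chord_end_deriv p x) ` active P x"
  have "finite ?D"
    using assms(1) by (simp add: active_def)
  then have "Min ?D \<le> chord_end_deriv p x" "chord_end_deriv p x \<le> Max ?D"
    "Min ?D \<le> chord_end_deriv q x" "chord_end_deriv q x \<le> Max ?D"
    using pq by simp_all
  then have "Min ?D < Max ?D"
    using neq by linarith
  then show ?thesis
    by (rule that)
qed

lemma funpow_psi_lift_not_translation:
  assumes "finite P" "P \<subseteq> ball 0 1" "2 \<le> card P" "0 < n"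
  shows "psi_lift P ^^ n \<noteq> (\<lambda>x. x + c)"
proof -
  have "P \<noteq> {}"
    using assms(3) by auto
  define R L where "R x = Min ((\<lambda>p. chord_end_deriv p x) ` active P x)"
    and "L x = Max ((\<lambda>p. chord_end_deriv p x) ` active P x)" for x
  have A: "finite (active P x)" "active P x \<noteq> {}" "active P x \<subseteq> ball 0 1" for x
    using assms(1,2) active_nonempty[OF assms(1) \<open>P \<noteq> {}\<close>] by (auto simp: active_def)
  have right: "(psi_lift P has_real_derivative R x) (at_right x)"
    and left: "(psi_lift P has_real_derivative L x) (at_left x)" for x
    unfolding R_def L_def by (rule psi_lift_one_sided_derivatives[OF assms(1) \<open>P \<noteq> {}\<close> assms(2)])+
  have "0 < chord_end_deriv p x" if "p \<in> active P x" for p x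
    using that A(3)[of x] by (intro chord_end_deriv_pos) auto
  then have pos: "0 < R x" for x
    using A(1,2)[of x] by (simp add: R_def Min_gr_iff)
  have le: "R x \<le> L x" for x
  proof -
    obtain p where "p \<in> active P x"
      using A(2) by blast
    then have "R x \<le> chord_end_deriv p x" "chord_end_deriv p x \<le> L x"
      using A(1)[of x] by (simp_all add: R_def L_def)
    then show ?thesis
      by linarith
  qed
  obtain x0 where "R x0 < L x0"
    unfolding R_def L_def by (rule exists_corner[OF assms(1-3)])
  then show ?thesis
    by (rule funpow_not_translation_if_corner[OF strict_mono_psi_lift[OF assms(1) \<open>P \<noteq> {}\<close> assms(2)]
          right left pos le _ assms(4)])
qed

section \<open>Conjugacy to a rotation\<close>

lemma conj_to_rotation_periodic_imp_id:
  assumes "conj_to_rotation f" "f ` sphere 0 1 \<subseteq> sphere 0 1"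
    and "y \<in> sphere 0 1" "(f ^^ n) y = y" "z \<in> sphere 0 1"
  shows "(f ^^ n) z = z"
proof -
  obtain h k and c :: complex where hk: "homeomorphism (sphere 0 1) (sphere 0 1) h k"
    and "norm c = 1" and conj: "\<And>w. w \<in> sphere 0 1 \<Longrightarrow> h (f (k w)) = c * w"
    using assms(1) unfolding conj_to_rotation_def by blast
  have hS: "h w \<in> sphere 0 1" and kS: "k w \<in> sphere 0 1" and kh: "k (h w) = w" and hk': "h (k w) = w"
    if "w \<in> sphere 0 1" for w
    using hk that unfolding homeomorphism_def by auto
  have rotS: "c ^ m * w \<in> sphere 0 1" if "w \<in> sphere 0 1" for m w
    using that \<open>norm c = 1\<close> by (simp add: norm_mult norm_power)
  have iterate: "(f ^^ m) w = k (c ^ m * h w)" if "w \<in> sphere 0 1" for m w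
  proof (induction m)
    case 0
    show ?case
      using kh[OF that] by simp
  next
    case (Suc m)
    define u where "u = c ^ m * h w"
    have "u \<in> sphere 0 1"
      unfolding u_def using rotS hS that by blast
    then have "f (k u) \<in> sphere 0 1"
      using assms(2) kS by blast
    then have "f (k u) = k (c * u)"
      using kh conj[OF \<open>u \<in> sphere 0 1\<close>] by metis
    then show ?case
      using Suc.IH by (simp add: u_def mult.assoc)
  qed
  have "h ((f ^^ n) y) = c ^ n * h y"
    using iterate[OF assms(3)] hk'[OF rotS[OF hS[OF assms(3)]]] by simp
  then have "c ^ n = 1"
    using assms(4) hS[OF assms(3)] by auto
  then show ?thesis
    using iterate[OF assms(5)] kh[OF assms(5)] by simp
qed

lemma conj_to_rotation_periodic_lift:
  assumes "conj_to_rotation f" "\<And>x. f (circ x) = circ (F x)" "(F ^^ q) x0 = x0 + of_int a"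
  shows "circ ((F ^^ q) x) = circ x"
proof -
  have iterate: "(f ^^ n) (circ x) = circ ((F ^^ n) x)" for n x
    by (induction n) (simp_all add: assms(2))
  have "f ` sphere 0 1 \<subseteq> sphere 0 1"
    using assms(2) by (auto simp: sphere_eq_range_circ)
  moreover have "(f ^^ q) (circ x0) = circ x0"
    using assms(3) by (simp add: iterate)
  ultimately have "(f ^^ q) (circ x) = circ x"
    using conj_to_rotation_periodic_imp_id[OF assms(1), of "circ x0" q "circ x"] by simp
  then show ?thesis
    by (simp add: iterate)
qed

theorem lemma2p7:
  fixes B :: "complex set" and n :: nat
  assumes "n \<ge> 2" and "convex_polygon n B"
    and "rot_number (psi B) \<in> \<rat>"
  shows "\<not> conj_to_rotation (psi B)"
proof
  assume conj: "conj_to_rotation (psi B)"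
  obtain P where P: "finite P" "card P = n" "P \<subseteq> ball 0 1" "B = convex hull P"
    using assms(2) unfolding convex_polygon_def by blast
  then have "P \<noteq> {}" "2 \<le> card P"
    using assms(1) by auto
  note polygon = P(1) \<open>P \<noteq> {}\<close> P(3)
  interpret circle_homeo_lift "psi_lift P"
    using circle_homeo_lift_psi_lift[OF polygon] .
  have "rot_number (psi B) = transl_number"
    using rot_number_eq_transl_number circle_lift_psi_convex_hull[OF polygon] by (simp add: P(4))
  then obtain a b where "0 < b" "transl_number = of_int a / of_int b"
    using assms(3) Rats_cases' by metis
  then obtain x0 where "(psi_lift P ^^ nat b) x0 = x0 + of_int a"
    using exists_periodic_point[of "nat b" a] by auto
  then have "circ ((psi_lift P ^^ nat b) x) = circ x" for x
    using conj_to_rotation_periodic_lift[OF conj] psi_convex_hull_circ[OF polygon] by (simp add: P(4))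
  then have "psi_lift P ^^ nat b = (\<lambda>x. x + (psi_lift P ^^ nat b) 0)"
    by (rule funpow_translation_if_circ_fixed)
  then show False
    using funpow_psi_lift_not_translation[OF P(1,3) \<open>2 \<le> card P\<close>] \<open>0 < b\<close> by simp
qed

end
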